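(* Let $(P_n)_{n\ge 0}$ be the sequence of polynomials in one variable $m$ defined by $P_0(m)=m$ and, for $n\ge 0$, \[P_{n+1}(m)=P_n(m+1)+\sum_{i=0}^{n}P_i(m)\,P_{n-i}(m).\] Then for every $n\ge 0$ the degree of $P_n$ is equal to $n+1$.
   Context: The polynomials $P_n$ have integer coefficients; $P_n(0)$ equals the number of closed lambda terms of size $n$ (de Bruijn indices having size $0$, abstractions and applications size $1$), though this interpretation is not needed for the claim. *)

theory Defs
  imports "HOL-Computational_Algebra.Polynomial"
begin

text \<open>P n as an integer polynomial in m; P (n+1)(m) = P n (m+1) + sum_{i=0}^n P i (m) P (n-i) (m).
  The shift m |-> m+1 is composition with [:1,1:].\<close>
fun P :: "nat \<Rightarrow> int poly" where
  "P 0 = [:0, 1:]"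
| "P (Suc n) = pcompose (P n) [:1, 1:] + (\<Sum>i\<in>{0..n}. P i * P (n - i))"

end

theory Submission
  imports Defs
begin

text \<open>In \<open>P (n + 1)\<close> the shifted term \<open>P n (m + 1)\<close> has degree only \<open>n + 1\<close>, while every
  product \<open>P i * P (n - i)\<close> has degree \<open>n + 2\<close> and a positive leading coefficient, so the
  top coefficients of the convolution sum cannot cancel.\<close>

lemma degree_sum_same_degree_lead_coeff_pos:
  fixes p :: "'i \<Rightarrow> 'a::linordered_idom poly"
  assumes "finite A" "A \<noteq> {}"
    and deg: "\<And>i. i \<in> A \<Longrightarrow> degree (p i) = d"
    and lc: "\<And>i. i \<in> A \<Longrightarrow> lead_coeff (p i) > 0"
  shows "degree (\<Sum>i\<in>A. p i) = d" and "lead_coeff (\<Sum>i\<in>A. p i) > 0"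
proof -
  have "coeff (\<Sum>i\<in>A. p i) d = (\<Sum>i\<in>A. lead_coeff (p i))"
    unfolding coeff_sum using deg by simp
  also have "\<dots> > 0"
    using assms(1,2) lc by (rule sum_pos)
  finally have top: "coeff (\<Sum>i\<in>A. p i) d > 0" .
  then have "d \<le> degree (\<Sum>i\<in>A. p i)"
    by (intro le_degree) simp
  moreover have "degree (\<Sum>i\<in>A. p i) \<le> d"
    using deg by (intro degree_sum_le) (auto simp: assms(1))
  ultimately show "degree (\<Sum>i\<in>A. p i) = d"
    by (rule antisym[rotated])
  with top show "lead_coeff (\<Sum>i\<in>A. p i) > 0"
    by simp
qed

lemma degree_mult_lead_coeff_pos:
  fixes p q :: "'a::linordered_idom poly"
  assumes "lead_coeff p > 0" "lead_coeff q > 0"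
  shows "degree (p * q) = degree p + degree q" and "lead_coeff (p * q) > 0"
proof -
  have "p \<noteq> 0" "q \<noteq> 0"
    using assms by auto
  then show "degree (p * q) = degree p + degree q"
    by (rule degree_mult_eq)
  with assms show "lead_coeff (p * q) > 0"
    by (simp add: coeff_mult_degree_sum)
qed

lemma degree_P_lead_coeff_P_pos: "degree (P n) = n + 1 \<and> lead_coeff (P n) > 0"
proof (induction n rule: less_induct)
  case (less n)
  show ?case
  proof (cases n)
    case 0
    then show ?thesis by simp
  next
    case (Suc k)
    define S where "S = (\<Sum>i\<in>{0..k}. P i * P (k - i))"
    have "degree (P i * P (k - i)) = k + 2" "lead_coeff (P i * P (k - i)) > 0"
      if "i \<in> {0..k}" for i
    proof -
      have "i < n" "k - i < n"
        using that Suc by auto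
      then have "degree (P i) = i + 1" "degree (P (k - i)) = k - i + 1"
        and lc: "lead_coeff (P i) > 0" "lead_coeff (P (k - i)) > 0"
        using less.IH by blast+
      with that show "degree (P i * P (k - i)) = k + 2"
        by (simp add: degree_mult_lead_coeff_pos(1)[OF lc])
      from lc show "lead_coeff (P i * P (k - i)) > 0"
        by (rule degree_mult_lead_coeff_pos(2))
    qed
    then have S: "degree S = k + 2" "lead_coeff S > 0"
      unfolding S_def by (intro degree_sum_same_degree_lead_coeff_pos; simp)+
    have "degree (pcompose (P k) [:1, 1:]) = k + 1"
      using less.IH[of k] Suc by (simp add: degree_pcompose)
    then have shift_lower: "degree (pcompose (P k) [:1, 1:]) < degree S"
      using S by simp
    have "P n = pcompose (P k) [:1, 1:] + S"
      using Suc S_def by simp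
    then have "degree (P n) = degree S" "lead_coeff (P n) = lead_coeff S"
      using degree_add_eq_right[OF shift_lower] lead_coeff_add_le[OF shift_lower] by simp_all
    with S Suc show ?thesis
      by simp
  qed
qed

theorem lemma1:
  fixes n :: nat
  shows "degree (P n) = n + 1"
  using degree_P_lead_coeff_P_pos by blast

end
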